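(* If $G\in\mathcal{G}_{\mathrm{plin}}$, then for some alphabet $\Sigma$ there is an embedding of $G$ into $\llbracket\Sigma^{\mathbb{Z}}\rrbracket$ whose image has linear plook-ahead and in which the cocycle of every group element takes only even values.
   Context: An alphabet is a finite set with at least two elements. $\llbracket\Sigma^{\mathbb{Z}}\rrbracket$ is the group of homeomorphisms $f$ of $\Sigma^{\mathbb{Z}}$ with a continuous cocycle $c:\Sigma^{\mathbb{Z}}\to\mathbb{Z}$ such that $f(x)=\sigma^{c(x)}(x)$, where $\sigma(x)_i=x_{i+1}$. A subgroup $G\le\llbracket\Sigma^{\mathbb{Z}}\rrbracket$ has plook-ahead $\alpha:\mathbb{N}\to\mathbb{N}$ if $\alpha(0)=0$ and for every non-identity $g\in G$ with cocycle $c$ there are $n\ge1$ and a point $x$ with $\sigma^p(x)=x$ for some $1\le p\le 2n+1$ and $|c(x)|+\alpha(|c(x)|)\ge n$. $\alpha$ is linear if $\alpha(n)\le Cn+C$ for some $C\in\mathbb{N}$ and all $n$. $\mathcal{G}_{\mathrm{plin}}$ is the class of groups isomorphic to a subgroup of $\llbracket\Sigma^{\mathbb{Z}}\rrbracket$, for some alphabet $\Sigma$, having linear plook-ahead. *)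

theory Defs
  imports "HOL-Analysis.Analysis" "HOL-Algebra.Bij"
begin

definition alphabet :: "nat set \<Rightarrow> bool" where
  "alphabet S \<longleftrightarrow> finite S \<and> card S \<ge> 2"

text \<open>The full shift: configurations Z -> S, with the product topology
  (the topology of the function space int => nat, nat discrete).\<close>
definition conf :: "nat set \<Rightarrow> (int \<Rightarrow> nat) set" where
  "conf S = {x. \<forall>i. x i \<in> S}"

definition shiftZ :: "int \<Rightarrow> (int \<Rightarrow> nat) \<Rightarrow> (int \<Rightarrow> nat)" where
  "shiftZ k x = (\<lambda>i. x (i + k))"

definition cocycle :: "nat set \<Rightarrow> ((int \<Rightarrow> nat) \<Rightarrow> (int \<Rightarrow> nat)) \<Rightarrow> ((int \<Rightarrow> nat) \<Rightarrow> int) \<Rightarrow> bool" where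
  "cocycle S f c \<longleftrightarrow> continuous_on (conf S) c \<and> (\<forall>x \<in> conf S. f x = shiftZ (c x) x)"

definition tfg :: "nat set \<Rightarrow> ((int \<Rightarrow> nat) \<Rightarrow> (int \<Rightarrow> nat)) set" where
  "tfg S = {f \<in> Bij (conf S). (\<exists>g. homeomorphism (conf S) (conf S) f g) \<and> (\<exists>c. cocycle S f c)}"

definition tfg_grp :: "nat set \<Rightarrow> ((int \<Rightarrow> nat) \<Rightarrow> (int \<Rightarrow> nat)) set \<Rightarrow> ((int \<Rightarrow> nat) \<Rightarrow> (int \<Rightarrow> nat)) monoid" where
  "tfg_grp S H = (BijGroup (conf S))\<lparr>carrier := H\<rparr>"

definition is_tfg_subgroup :: "nat set \<Rightarrow> ((int \<Rightarrow> nat) \<Rightarrow> (int \<Rightarrow> nat)) set \<Rightarrow> bool" where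
  "is_tfg_subgroup S H \<longleftrightarrow> H \<subseteq> tfg S \<and> subgroup H (BijGroup (conf S))"

definition plookahead :: "nat set \<Rightarrow> ((int \<Rightarrow> nat) \<Rightarrow> (int \<Rightarrow> nat)) set \<Rightarrow> (nat \<Rightarrow> nat) \<Rightarrow> bool" where
  "plookahead S H \<alpha> \<longleftrightarrow> \<alpha> 0 = 0 \<and>
     (\<forall>g \<in> H. g \<noteq> \<one>\<^bsub>BijGroup (conf S)\<^esub> \<longrightarrow> (\<forall>c. cocycle S g c \<longrightarrow>
        (\<exists>n::nat. n \<ge> 1 \<and> (\<exists>x \<in> conf S. (\<exists>p::nat. 1 \<le> p \<and> p \<le> 2*n+1 \<and> shiftZ (int p) x = x)
            \<and> nat \<bar>c x\<bar> + \<alpha> (nat \<bar>c x\<bar>) \<ge> n))))"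

definition linear_fun :: "(nat \<Rightarrow> nat) \<Rightarrow> bool" where
  "linear_fun \<alpha> \<longleftrightarrow> (\<exists>C::nat. \<forall>n. \<alpha> n \<le> C*n + C)"

definition linear_plookahead :: "nat set \<Rightarrow> ((int \<Rightarrow> nat) \<Rightarrow> (int \<Rightarrow> nat)) set \<Rightarrow> bool" where
  "linear_plookahead S H \<longleftrightarrow> (\<exists>\<alpha>. linear_fun \<alpha> \<and> plookahead S H \<alpha>)"

definition G_plin :: "('g, 'm) monoid_scheme \<Rightarrow> bool" where
  "G_plin G \<longleftrightarrow> (\<exists>S H. alphabet S \<and> is_tfg_subgroup S H \<and> linear_plookahead S H
      \<and> G \<cong> tfg_grp S H)"

end

theory Submission
  imports Defs
begin

text \<open>Realise \<open>G\<close> as a subgroup \<open>H\<close> of \<open>\<lbrakk>\<Sigma>\<^sup>\<int>\<rbrakk>\<close> with linear plook-ahead \<open>\<alpha>\<close>, and let each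
  \<open>f \<in> H\<close>, with cocycle \<open>c\<^sub>f\<close>, act through the even coordinates only: with \<open>(e z)\<^sub>i = z\<^bsub>2i\<^esub>\<close>,
  put \<open>f' z = \<sigma>\<^bsup>2 c\<^sub>f(e z)\<^esup> z\<close>. Since \<open>e (f' z) = f (e z)\<close>, the map \<open>f \<mapsto> f'\<close> is an injective
  homomorphism into \<open>\<lbrakk>\<Sigma>\<^sup>\<int>\<rbrakk>\<close>, and the cocycles of its image are even. A periodic witness \<open>x\<close>
  for \<open>f\<close> spreads to the witness \<open>z\<^sub>i = x\<^bsub>i div 2\<^esub>\<close> for \<open>f'\<close>, with twice the period and twice
  the cocycle value, so \<open>m \<mapsto> 2 \<alpha>(m div 2) + 1\<close> is a (still linear) plook-ahead for the image.\<close>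

definition agree_within :: "nat \<Rightarrow> (int \<Rightarrow> nat) \<Rightarrow> (int \<Rightarrow> nat) \<Rightarrow> bool" where
  "agree_within N z z' \<longleftrightarrow> (\<forall>i. \<bar>i\<bar> \<le> int N \<longrightarrow> z' i = z i)"

lemma locally_determined_imp_continuous_on:
  assumes "\<forall>z\<in>A. \<exists>N. \<forall>z'\<in>A. agree_within N z z' \<longrightarrow> F z' = F z"
  shows "continuous_on A F"
  unfolding continuous_on_topological
proof (intro ballI allI impI)
  fix z B assume z: "z \<in> A" and B: "open B" "F z \<in> B"
  obtain N where N: "\<forall>z'\<in>A. agree_within N z z' \<longrightarrow> F z' = F z" using assms z by blast
  let ?U = "{f. \<forall>i\<in>{-int N..int N}. f (id i) \<in> (\<lambda>i. {z i}) i}"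
  have "open ?U" by (rule product_topology_basis') (auto simp: open_discrete)
  moreover have "z \<in> ?U" by auto
  moreover have "F y \<in> B" if "y \<in> A" "y \<in> ?U" for y
  proof -
    have "agree_within N z y" using that(2) by (auto simp: agree_within_def abs_le_iff)
    then show ?thesis using N B that(1) by auto
  qed
  ultimately show "\<exists>U. open U \<and> z \<in> U \<and> (\<forall>y\<in>A. y \<in> U \<longrightarrow> F y \<in> B)" by blast
qed

lemma continuous_on_imp_locally_determined:
  fixes c :: "(int \<Rightarrow> nat) \<Rightarrow> 'b::discrete_topology"
  assumes "continuous_on A c" "z \<in> A"
  shows "\<exists>N. \<forall>z'\<in>A. agree_within N z z' \<longrightarrow> c z' = c z"
proof -
  obtain U where U: "open U" "z \<in> U" "\<forall>y\<in>A. y \<in> U \<longrightarrow> c y \<in> {c z}"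
    using assms unfolding continuous_on_topological by (meson open_discrete singletonI)
  have "openin (product_topology (\<lambda>i. euclidean) UNIV) U" using U(1) by (simp add: open_fun_def)
  from product_topology_open_contains_basis[OF this U(2)]
  obtain X where X: "z \<in> (\<Pi>\<^sub>E i\<in>UNIV. X i)" "finite {i. X i \<noteq> UNIV}" "(\<Pi>\<^sub>E i\<in>UNIV. X i) \<subseteq> U"
    by auto
  define F where "F = {i. X i \<noteq> UNIV}"
  define N where "N = Max (insert 0 ((\<lambda>i. nat \<bar>i\<bar>) ` F))"
  have window: "\<bar>i\<bar> \<le> int N" if "i \<in> F" for i
  proof -
    have "nat \<bar>i\<bar> \<le> N" unfolding N_def using X(2) that by (intro Max_ge) (auto simp: F_def)
    then show ?thesis by simp
  qed
  have "z' \<in> (\<Pi>\<^sub>E i\<in>UNIV. X i)" if "agree_within N z z'" for z'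
  proof (simp add: PiE_iff, intro allI)
    fix i show "z' i \<in> X i"
      using that X(1) window[of i] by (cases "i \<in> F") (auto simp: agree_within_def PiE_iff F_def)
  qed
  then show ?thesis using X(3) U(3) by blast
qed

lemma alphabet_obtain_two:
  assumes "alphabet S"
  obtains a b where "a \<in> S" "b \<in> S" "a \<noteq> b"
  using assms card_le_Suc0_iff_eq[of S] unfolding alphabet_def by fastforce

text \<open>Two cocycles of the same map differ nowhere: far away from the window on which both
  are constant, put a single marker symbol, whose position pins down the shift.\<close>
lemma cocycle_unique:
  assumes S: "alphabet S" and c: "cocycle S f c" and d: "cocycle S f d" and x: "x \<in> conf S"
  shows "c x = d x"
proof (rule ccontr)
  assume ne: "c x \<noteq> d x"
  obtain N1 where N1: "\<forall>z\<in>conf S. agree_within N1 x z \<longrightarrow> c z = c x"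
    using continuous_on_imp_locally_determined[of "conf S" c x] c x by (auto simp: cocycle_def)
  obtain N2 where N2: "\<forall>z\<in>conf S. agree_within N2 x z \<longrightarrow> d z = d x"
    using continuous_on_imp_locally_determined[of "conf S" d x] d x by (auto simp: cocycle_def)
  obtain a b where ab: "a \<in> S" "b \<in> S" "a \<noteq> b" using alphabet_obtain_two[OF S] .
  define N where "N = max N1 N2"
  define k where "k = c x - d x"
  define M where "M = int N + \<bar>k\<bar> + 1"
  define z where "z = (\<lambda>i. if \<bar>i\<bar> \<le> int N then x i else if i = M then a else b)"
  have z: "z \<in> conf S" using x ab by (auto simp: conf_def z_def)
  have "agree_within N1 x z" "agree_within N2 x z" by (auto simp: agree_within_def z_def N_def)
  then have "c z = c x" "d z = d x" using N1 N2 z by auto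
  moreover have "shiftZ (c z) z = shiftZ (d z) z" using c d z by (simp add: cocycle_def)
  ultimately have "shiftZ (c x) z (M - d x) = shiftZ (d x) z (M - d x)" by simp
  then have "z (M + k) = z M" by (simp add: shiftZ_def k_def algebra_simps)
  moreover have "k \<noteq> 0" using ne k_def by simp
  ultimately show False using ab(3) by (auto simp: z_def M_def split: if_splits)
qed

lemma shiftZ_conf: "x \<in> conf S \<Longrightarrow> shiftZ k x \<in> conf S"
  by (simp add: conf_def shiftZ_def)

lemma shiftZ_shiftZ: "shiftZ a (shiftZ b z) = shiftZ (a + b) z"
  by (simp add: shiftZ_def algebra_simps)

lemma continuous_on_shift_by:
  assumes "continuous_on (conf S) c"
  shows "continuous_on (conf S) (\<lambda>z. shiftZ (c z) z)"
proof (intro continuous_on_coordinatewise_then_product locally_determined_imp_continuous_on ballI)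
  fix i z assume z: "z \<in> conf S"
  obtain N where N: "\<forall>z'\<in>conf S. agree_within N z z' \<longrightarrow> c z' = c z"
    using continuous_on_imp_locally_determined[OF assms z] by blast
  have "agree_within N z z'" if "agree_within (max N (nat \<bar>i + c z\<bar>)) z z'" for z'
    using that by (auto simp: agree_within_def)
  with N show "\<exists>N. \<forall>z'\<in>conf S. agree_within N z z' \<longrightarrow> shiftZ (c z') z' i = shiftZ (c z) z i"
    by (intro exI[of _ "max N (nat \<bar>i + c z\<bar>)"]) (auto simp: agree_within_def shiftZ_def)
qed

definition the_cocycle :: "nat set \<Rightarrow> ((int \<Rightarrow> nat) \<Rightarrow> (int \<Rightarrow> nat)) \<Rightarrow> (int \<Rightarrow> nat) \<Rightarrow> int" where
  "the_cocycle S f = (SOME c. cocycle S f c)"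

lemma cocycle_the_cocycle: "f \<in> tfg S \<Longrightarrow> cocycle S f (the_cocycle S f)"
  unfolding tfg_def the_cocycle_def by (metis (mono_tags, lifting) mem_Collect_eq someI)

lemma the_cocycle_eq:
  "alphabet S \<Longrightarrow> cocycle S f c \<Longrightarrow> x \<in> conf S \<Longrightarrow> the_cocycle S f x = c x"
  unfolding the_cocycle_def by (rule cocycle_unique) (auto intro: someI[where P = "cocycle S f"])

lemma tfg_continuous_on: "f \<in> tfg S \<Longrightarrow> continuous_on (conf S) f"
  unfolding tfg_def homeomorphism_def by auto

lemma tfg_conf: "f \<in> tfg S \<Longrightarrow> x \<in> conf S \<Longrightarrow> f x \<in> conf S"
  unfolding tfg_def Bij_def bij_betw_def by auto

lemma cocycle_compose:
  assumes f: "f \<in> tfg S" and g: "g \<in> tfg S"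
  shows "cocycle S (compose (conf S) f g) (\<lambda>x. the_cocycle S f (g x) + the_cocycle S g x)"
  unfolding cocycle_def
proof
  have "continuous_on (conf S) (\<lambda>x. the_cocycle S f (g x))"
    using cocycle_the_cocycle[OF f] tfg_continuous_on[OF g] tfg_conf[OF g]
    by (intro continuous_on_compose2[of "conf S" "the_cocycle S f" "conf S" g]) (auto simp: cocycle_def)
  then show "continuous_on (conf S) (\<lambda>x. the_cocycle S f (g x) + the_cocycle S g x)"
    using cocycle_the_cocycle[OF g] by (intro continuous_on_add) (auto simp: cocycle_def)
  show "\<forall>x\<in>conf S. compose (conf S) f g x = shiftZ (the_cocycle S f (g x) + the_cocycle S g x) x"
    using cocycle_the_cocycle[OF f] cocycle_the_cocycle[OF g] tfg_conf[OF g]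
    by (auto simp: compose_def cocycle_def shiftZ_shiftZ)
qed

definition even_coords :: "(int \<Rightarrow> nat) \<Rightarrow> (int \<Rightarrow> nat)" where
  "even_coords z = (\<lambda>i. z (2 * i))"

definition spread :: "(int \<Rightarrow> nat) \<Rightarrow> (int \<Rightarrow> nat)" where
  "spread x = (\<lambda>i. x (i div 2))"

lemma even_coords_conf: "z \<in> conf S \<Longrightarrow> even_coords z \<in> conf S"
  by (simp add: conf_def even_coords_def)

lemma even_coords_shiftZ: "even_coords (shiftZ (2 * k) z) = shiftZ k (even_coords z)"
  by (simp add: even_coords_def shiftZ_def algebra_simps)

lemma continuous_on_even_coords: "continuous_on A even_coords"
  unfolding even_coords_def
  by (intro continuous_on_coordinatewise_then_product
      continuous_on_subset[OF continuous_on_product_coordinates]) auto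

lemma spread_conf: "x \<in> conf S \<Longrightarrow> spread x \<in> conf S"
  by (simp add: conf_def spread_def)

lemma even_coords_spread: "even_coords (spread x) = x"
  by (simp add: even_coords_def spread_def)

lemma shiftZ_spread: "shiftZ (2 * int p) (spread x) = spread (shiftZ (int p) x)"
  by (simp add: shiftZ_def spread_def add.commute)

definition doubled :: "nat set \<Rightarrow> ((int \<Rightarrow> nat) \<Rightarrow> (int \<Rightarrow> nat)) \<Rightarrow> ((int \<Rightarrow> nat) \<Rightarrow> (int \<Rightarrow> nat))" where
  "doubled S f = (\<lambda>z\<in>conf S. shiftZ (2 * the_cocycle S f (even_coords z)) z)"

lemma doubled_conf: "z \<in> conf S \<Longrightarrow> doubled S f z \<in> conf S"
  by (simp add: doubled_def shiftZ_conf)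

lemma cocycle_doubled:
  assumes "f \<in> tfg S"
  shows "cocycle S (doubled S f) (\<lambda>z. 2 * the_cocycle S f (even_coords z))"
  unfolding cocycle_def
proof
  have "continuous_on (conf S) (\<lambda>z. the_cocycle S f (even_coords z))"
    using cocycle_the_cocycle[OF assms] even_coords_conf
    by (intro continuous_on_compose2[of "conf S" "the_cocycle S f" "conf S" even_coords]
        continuous_on_even_coords) (auto simp: cocycle_def)
  then show "continuous_on (conf S) (\<lambda>z. 2 * the_cocycle S f (even_coords z))"
    by (intro continuous_on_compose2[of UNIV "\<lambda>k::int. 2 * k" "conf S" "\<lambda>z. the_cocycle S f (even_coords z)"]) auto
qed (simp add: doubled_def)

lemma doubled_cocycle_even:
  assumes "alphabet S" "f \<in> tfg S" "cocycle S (doubled S f) c" "x \<in> conf S"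
  shows "even (c x)"
  using the_cocycle_eq[OF assms(1) cocycle_doubled[OF assms(2)] assms(4)]
    the_cocycle_eq[OF assms(1) assms(3,4)] by simp

lemma even_coords_doubled:
  assumes "f \<in> tfg S" "z \<in> conf S"
  shows "even_coords (doubled S f z) = f (even_coords z)"
  using assms cocycle_the_cocycle[OF assms(1)] even_coords_conf[OF assms(2)]
  by (simp add: doubled_def even_coords_shiftZ cocycle_def)

lemma doubled_compose:
  assumes S: "alphabet S" and f: "f \<in> tfg S" and g: "g \<in> tfg S"
  shows "doubled S (compose (conf S) f g) = compose (conf S) (doubled S f) (doubled S g)"
proof (rule extensionalityI[of _ "conf S"])
  show "doubled S (compose (conf S) f g) \<in> extensional (conf S)"
    "compose (conf S) (doubled S f) (doubled S g) \<in> extensional (conf S)"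
    by (simp_all add: doubled_def compose_def)
  fix z assume z: "z \<in> conf S"
  let ?cf = "the_cocycle S f" and ?cg = "the_cocycle S g" and ?e = "even_coords z"
  have "the_cocycle S (compose (conf S) f g) ?e = ?cf (g ?e) + ?cg ?e"
    using the_cocycle_eq[OF S cocycle_compose[OF f g] even_coords_conf[OF z]] by simp
  then have "doubled S (compose (conf S) f g) z = shiftZ (2 * ?cf (g ?e)) (shiftZ (2 * ?cg ?e) z)"
    using z by (simp add: doubled_def shiftZ_shiftZ distrib_left)
  also have "\<dots> = doubled S f (doubled S g z)"
    using even_coords_doubled[OF g z] z doubled_conf[OF z] by (simp add: doubled_def)
  finally show "doubled S (compose (conf S) f g) z = compose (conf S) (doubled S f) (doubled S g) z"
    using z by (simp add: compose_def)
qed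

lemma doubled_id:
  assumes "alphabet S"
  shows "doubled S (\<lambda>x\<in>conf S. x) = (\<lambda>x\<in>conf S. x)"
proof -
  have "cocycle S (\<lambda>x\<in>conf S. x) (\<lambda>_. 0)" by (simp add: cocycle_def shiftZ_def)
  then show ?thesis unfolding doubled_def
    using the_cocycle_eq[OF assms] even_coords_conf by (intro restrict_ext) (simp add: shiftZ_def)
qed

lemma doubled_inj:
  assumes "f \<in> tfg S" "g \<in> tfg S" "doubled S f = doubled S g"
  shows "f = g"
proof (rule extensionalityI[of _ "conf S"])
  show "f \<in> extensional (conf S)" "g \<in> extensional (conf S)"
    using assms by (auto simp: tfg_def Bij_def)
  fix x assume "x \<in> conf S"
  then show "f x = g x"
    using even_coords_doubled[OF _ spread_conf] assms by (metis even_coords_spread)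
qed

lemma doubled_tfg:
  assumes S: "alphabet S" and f: "f \<in> tfg S" and g: "g \<in> tfg S"
    and fg: "compose (conf S) f g = (\<lambda>x\<in>conf S. x)" and gf: "compose (conf S) g f = (\<lambda>x\<in>conf S. x)"
  shows "doubled S f \<in> tfg S"
proof -
  have inv: "doubled S f (doubled S g z) = z" "doubled S g (doubled S f z) = z" if "z \<in> conf S" for z
    using doubled_compose[OF S f g] doubled_compose[OF S g f] fg gf doubled_id[OF S] that
    by (metis compose_eq restrict_apply')+
  have cont: "continuous_on (conf S) (doubled S h)" if "h \<in> tfg S" for h
    using continuous_on_shift_by[OF cocycle_doubled[OF that, unfolded cocycle_def, THEN conjunct1]]
    by (rule continuous_on_cong[THEN iffD1, rotated 2]) (auto simp: doubled_def)
  have "bij_betw (doubled S f) (conf S) (conf S)"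
    using inv doubled_conf by (intro bij_betw_byWitness[where f' = "doubled S g"]) auto
  then have "doubled S f \<in> Bij (conf S)" by (simp add: Bij_def doubled_def)
  moreover have "homeomorphism (conf S) (conf S) (doubled S f) (doubled S g)"
    using inv doubled_conf by (intro homeomorphismI cont f g) auto
  ultimately show ?thesis using cocycle_doubled[OF f] unfolding tfg_def by blast
qed

lemma subgroup_inverse_compose:
  assumes H: "subgroup H (BijGroup A)" and f: "f \<in> H"
  obtains g where "g \<in> H" "compose A f g = (\<lambda>x\<in>A. x)" "compose A g f = (\<lambda>x\<in>A. x)"
proof -
  interpret group "BijGroup A" by (rule group_BijGroup)
  have "f \<in> carrier (BijGroup A)" using subgroup.subset[OF H] f by blast
  then show ?thesis
    using that[of "inv\<^bsub>BijGroup A\<^esub> f"] subgroup.m_inv_closed[OF H f] r_inv l_inv inv_closed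
    by (simp add: BijGroup_def)
qed

lemma doubled_embedding:
  assumes S: "alphabet S" and H: "is_tfg_subgroup S H"
  shows "doubled S \<in> hom (tfg_grp S H) (BijGroup (conf S))" "inj_on (doubled S) H"
    and "doubled S ` H \<subseteq> tfg S"
proof -
  have Ht: "H \<subseteq> tfg S" and sg: "subgroup H (BijGroup (conf S))"
    using H by (auto simp: is_tfg_subgroup_def)
  show tfg: "doubled S ` H \<subseteq> tfg S"
  proof
    fix h assume "h \<in> doubled S ` H"
    then obtain f where f: "f \<in> H" and h: "h = doubled S f" by blast
    obtain g where "g \<in> H" "compose (conf S) f g = (\<lambda>x\<in>conf S. x)" "compose (conf S) g f = (\<lambda>x\<in>conf S. x)"
      using subgroup_inverse_compose[OF sg f] .
    then show "h \<in> tfg S" using doubled_tfg[OF S] f h Ht by blast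
  qed
  have Bij: "H \<subseteq> Bij (conf S)" "doubled S ` H \<subseteq> Bij (conf S)"
    using Ht tfg by (auto simp: tfg_def)
  show "doubled S \<in> hom (tfg_grp S H) (BijGroup (conf S))"
    using Bij Ht doubled_compose[OF S]
    by (intro homI) (auto simp: tfg_grp_def BijGroup_def image_subset_iff subset_iff)
  show "inj_on (doubled S) H" by (rule inj_onI) (use doubled_inj Ht in blast)
qed

definition doubled_lookahead :: "(nat \<Rightarrow> nat) \<Rightarrow> nat \<Rightarrow> nat" where
  "doubled_lookahead \<alpha> m = (if m = 0 then 0 else 2 * \<alpha> (m div 2) + 1)"

lemma linear_fun_doubled_lookahead:
  assumes "linear_fun \<alpha>"
  shows "linear_fun (doubled_lookahead \<alpha>)"
proof -
  obtain C where C: "\<And>n. \<alpha> n \<le> C * n + C" using assms by (auto simp: linear_fun_def)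
  have "doubled_lookahead \<alpha> m \<le> (2 * C + 1) * m + (2 * C + 1)" for m
  proof -
    have "2 * \<alpha> (m div 2) \<le> C * (2 * (m div 2)) + 2 * C" using C[of "m div 2"] by simp
    also have "\<dots> \<le> C * m + 2 * C" by simp
    finally show ?thesis by (auto simp: doubled_lookahead_def algebra_simps)
  qed
  then show ?thesis unfolding linear_fun_def by blast
qed

lemma plookahead_doubled:
  assumes S: "alphabet S" and H: "H \<subseteq> tfg S" and pa: "plookahead S H \<alpha>"
  shows "plookahead S (doubled S ` H) (doubled_lookahead \<alpha>)"
  unfolding plookahead_def
proof (intro conjI ballI impI allI)
  show "doubled_lookahead \<alpha> 0 = 0" by (simp add: doubled_lookahead_def)
  fix h d assume h: "h \<in> doubled S ` H" and ne: "h \<noteq> \<one>\<^bsub>BijGroup (conf S)\<^esub>" and d: "cocycle S h d"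
  obtain f where fH: "f \<in> H" and hf: "h = doubled S f" using h by blast
  have f: "f \<in> tfg S" using fH H by blast
  have "f \<noteq> \<one>\<^bsub>BijGroup (conf S)\<^esub>" using ne hf doubled_id[OF S] by (auto simp: BijGroup_def)
  then obtain n x p where n: "n \<ge> 1" and x: "x \<in> conf S" and p: "1 \<le> p" "p \<le> 2 * n + 1"
    and per: "shiftZ (int p) x = x"
    and bound: "n \<le> nat \<bar>the_cocycle S f x\<bar> + \<alpha> (nat \<bar>the_cocycle S f x\<bar>)"
    using pa fH cocycle_the_cocycle[OF f] unfolding plookahead_def by blast
  define m where "m = nat \<bar>the_cocycle S f x\<bar>"
  have "m \<noteq> 0" using bound n pa by (auto simp: m_def plookahead_def)
  have "d (spread x) = 2 * the_cocycle S f x"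
    using the_cocycle_eq[OF S cocycle_doubled[OF f] spread_conf[OF x]]
      the_cocycle_eq[OF S d spread_conf[OF x]] hf by (simp add: even_coords_spread)
  then have "nat \<bar>d (spread x)\<bar> = 2 * m" by (simp add: m_def abs_mult nat_mult_distrib)
  then have "2 * n + 1 \<le> nat \<bar>d (spread x)\<bar> + doubled_lookahead \<alpha> (nat \<bar>d (spread x)\<bar>)"
    using bound \<open>m \<noteq> 0\<close> by (simp add: doubled_lookahead_def m_def)
  moreover have "shiftZ (int (2 * p)) (spread x) = spread x"
    using shiftZ_spread[of p x] per by simp
  ultimately show "\<exists>n\<ge>1. \<exists>z\<in>conf S. (\<exists>p\<ge>1. p \<le> 2 * n + 1 \<and> shiftZ (int p) z = z)
      \<and> n \<le> nat \<bar>d z\<bar> + doubled_lookahead \<alpha> (nat \<bar>d z\<bar>)"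
    using spread_conf[OF x] p by (intro exI[of _ "2 * n + 1"] conjI bexI[of _ "spread x"] exI[of _ "2 * p"]) auto
qed

theorem mainTheorem5:
  fixes G :: "('g, 'm) monoid_scheme"
  assumes "G_plin G"
  shows "\<exists>S \<phi>. alphabet S \<and> \<phi> \<in> hom G (BijGroup (conf S)) \<and> inj_on \<phi> (carrier G)
     \<and> \<phi> ` carrier G \<subseteq> tfg S \<and> linear_plookahead S (\<phi> ` carrier G)
     \<and> (\<forall>g \<in> carrier G. \<forall>c. cocycle S (\<phi> g) c \<longrightarrow> (\<forall>x \<in> conf S. even (c x)))"
proof -
  obtain S H \<psi> where S: "alphabet S" and H: "is_tfg_subgroup S H" and lp: "linear_plookahead S H"
    and \<psi>: "\<psi> \<in> iso G (tfg_grp S H)"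
    using assms by (auto simp: G_plin_def is_iso_def)
  have Ht: "H \<subseteq> tfg S" using H by (simp add: is_tfg_subgroup_def)
  have \<psi>G: "\<psi> \<in> hom G (tfg_grp S H)" "\<psi> ` carrier G = H" "inj_on \<psi> (carrier G)"
    using \<psi> by (auto simp: iso_iff tfg_grp_def)
  define \<phi> where "\<phi> = doubled S \<circ> \<psi>"
  have img: "\<phi> ` carrier G = doubled S ` H" unfolding \<phi>_def image_comp[symmetric] \<psi>G(2) ..
  obtain \<alpha> where "linear_fun \<alpha>" "plookahead S H \<alpha>" using lp by (auto simp: linear_plookahead_def)
  then have "linear_plookahead S (\<phi> ` carrier G)"
    unfolding img linear_plookahead_def
    using linear_fun_doubled_lookahead plookahead_doubled[OF S Ht] by blast
  moreover have "\<phi> \<in> hom G (BijGroup (conf S))"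
    unfolding \<phi>_def using \<psi>G(1) doubled_embedding(1)[OF S H] by (rule hom_compose)
  moreover have "inj_on \<phi> (carrier G)"
    unfolding \<phi>_def using \<psi>G(3) doubled_embedding(2)[OF S H] \<psi>G(2) by (intro comp_inj_on) simp_all
  moreover have "\<phi> ` carrier G \<subseteq> tfg S" unfolding img using doubled_embedding(3)[OF S H] .
  moreover have "\<forall>g \<in> carrier G. \<forall>c. cocycle S (\<phi> g) c \<longrightarrow> (\<forall>x \<in> conf S. even (c x))"
    using doubled_cocycle_even[OF S] \<psi>G(2) Ht by (auto simp: \<phi>_def)
  ultimately show ?thesis using S by blast
qed

end
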